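(* Let $r\ge 2$ and let $H$ be an $r$-graph with at least $g(r,4)$ edges. Then there is a constant $b=b(H)>0$ such that $C_r(n,H)=\Omega(n^b)$ as $n\to\infty$.
   Context: An $r$-graph is an $r$-uniform hypergraph; $K_n^{(r)}$ is the complete $r$-graph on $n$ vertices. A copy of an $r$-graph $H$ in $K_n^{(r)}$ is a subhypergraph isomorphic to $H$. An $(n,r,H)$-local coloring with $k$ colors is a family of edge-colorings $f_v:E(K_n^{(r)})\to[k]$, one per vertex $v$, such that for every copy $T$ of $H$ there is $u\in V(T)$ with $f_u$ injective on $E(T)$. $C_r(n,H)$ is the minimum such $k$. A sunflower $S_r(d,m)$ is an $r$-graph with $m$ edges that pairwise intersect in the same $d$-vertex set. $g(r,m)$ denotes the minimum integer $N$ such that every $r$-graph with at least $N$ edges contains a sunflower $S_r(d,m)$ for some $0\le d\le r-1$ (by Erdős–Rado, $(m-1)^r\le g(r,m)\le (m-1)^r r!+1$). *)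

theory Defs
  imports Main "HOL-Library.Landau_Symbols"
begin

definition is_rgraph :: "nat \<Rightarrow> 'a set \<Rightarrow> 'a set set \<Rightarrow> bool" where
  "is_rgraph r V E \<longleftrightarrow> finite V \<and> (\<forall>e\<in>E. e \<subseteq> V \<and> card e = r)"

definition Kedges :: "nat \<Rightarrow> nat \<Rightarrow> nat set set" where
  "Kedges n r = {e. e \<subseteq> {..<n} \<and> card e = r}"

text \<open>Copies of H in the complete r-graph on {0..<n} are the images of injections
  phi : V -> {0..<n}; its vertex set is phi ` V and its edge set is the image of E.\<close>
definition local_coloring ::
  "nat \<Rightarrow> nat \<Rightarrow> 'a set \<Rightarrow> 'a set set \<Rightarrow> nat \<Rightarrow> (nat \<Rightarrow> nat set \<Rightarrow> nat) \<Rightarrow> bool" where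
  "local_coloring n r V E k f \<longleftrightarrow>
     (\<forall>v<n. \<forall>e\<in>Kedges n r. f v e \<in> {1..k}) \<and>
     (\<forall>\<phi>. inj_on \<phi> V \<and> \<phi> ` V \<subseteq> {..<n} \<longrightarrow>
        (\<exists>u\<in>\<phi> ` V. inj_on (f u) ((\<lambda>e. \<phi> ` e) ` E)))"

definition C_loc :: "nat \<Rightarrow> nat \<Rightarrow> 'a set \<Rightarrow> 'a set set \<Rightarrow> nat" where
  "C_loc r n V E = (LEAST k. \<exists>f. local_coloring n r V E k f)"

definition has_sunflower :: "'a set set \<Rightarrow> nat \<Rightarrow> nat \<Rightarrow> bool" where
  "has_sunflower E d m \<longleftrightarrow>
     (\<exists>S K. S \<subseteq> E \<and> card S = m \<and> card K = d \<and>
        (\<forall>e\<in>S. \<forall>e'\<in>S. e \<noteq> e' \<longrightarrow> e \<inter> e' = K))"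

text \<open>g(r,m): least N such that every (finite) r-graph with at least N edges contains
  a sunflower S_r(d,m) for some 0 <= d <= r-1.  Vertices taken from nat (w.l.o.g.).\<close>
definition g_sun :: "nat \<Rightarrow> nat \<Rightarrow> nat" where
  "g_sun r m = (LEAST N. \<forall>(V::nat set) E. is_rgraph r V E \<and> card E \<ge> N \<longrightarrow>
                    (\<exists>d\<le>r-1. has_sunflower E d m))"

end

theory Submission
  imports Defs "HOL-Library.FuncSet" "HOL-Library.Disjoint_Sets"
begin

(*
  By the Erdos-Rado argument, H contains a sunflower of four edges with kernel K and
  petals of size p = r - |K| >= 1; let R be the n0 vertices of H outside the petals.
  Place R on {0..<n0} and cut the remaining vertices of K_n into M = (n - n0) div p blocks
  of p consecutive vertices; B_j is the edge formed by the image of K and the j-th block.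
  Any four distinct blocks a, b, c, d carry a copy of H whose sunflower edges are
  B_a, ..., B_d.  Given a local colouring with k colours, iterated pigeonholing finds such
  a, b, c, d for which every vertex of R and of the blocks a, b gives B_c and B_d the same
  colour and every vertex of the blocks c, d gives B_a and B_b the same colour, as soon as
  M > k^n0 (L^2 (L+1)^2 + L + 1) with L = k^p.  No vertex of that copy sees it rainbow,
  so M = O(k^(n0 + 4p)), i.e. C_r(n,H) = Omega(n^(1/(n0 + 4p))).
*)

section \<open>Pigeonhole\<close>

lemma pigeonhole_large_fibre:
  assumes "finite A" "finite B" "g ` A \<subseteq> B" "card B * t < card A"
  shows "\<exists>y\<in>B. t < card {x\<in>A. g x = y}"
proof -
  have "B \<noteq> {}"
    using assms(3,4) by auto
  then obtain y where "y \<in> B" and y: "card A \<le> card (g -` {y} \<inter> A) * card B"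
    using pigeonhole_card[of g A B] assms(1-3) by blast
  moreover have "g -` {y} \<inter> A = {x\<in>A. g x = y}"
    by blast
  ultimately have "t * card B < card {x\<in>A. g x = y} * card B"
    using assms(4) by (metis mult.commute order_less_le_trans)
  with \<open>y \<in> B\<close> show ?thesis
    by (meson mult_less_cancel2)
qed

lemma pigeonhole_collision:
  assumes "finite B" "g ` A \<subseteq> B" "card B < card A"
  shows "\<exists>x\<in>A. \<exists>y\<in>A. x \<noteq> y \<and> g x = g y"
proof -
  have "card (g ` A) < card A"
    using assms card_mono le_less_trans by blast
  then show ?thesis
    using pigeonhole unfolding inj_on_def by blast
qed

lemma pair_agreeing_on_large_set:
  fixes \<chi> :: "'i \<Rightarrow> 'j \<Rightarrow> 'c"
  assumes "finite T" "finite A" "finite C" "\<forall>x\<in>T. \<forall>y\<in>A. \<chi> x y \<in> C"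
    and "card C < card A" "card A ^ 2 * t < card T"
  shows "\<exists>a\<in>A. \<exists>b\<in>A. a \<noteq> b \<and> t < card {x\<in>T. \<chi> x a = \<chi> x b}"
proof -
  define good where "good x q \<longleftrightarrow> q \<in> A \<times> A \<and> fst q \<noteq> snd q \<and> \<chi> x (fst q) = \<chi> x (snd q)"
    for x q
  have "\<forall>x\<in>T. \<exists>q. good x q"
  proof
    fix x
    assume "x \<in> T"
    then obtain a b where "a \<in> A" "b \<in> A" "a \<noteq> b" "\<chi> x a = \<chi> x b"
      using pigeonhole_collision[of C "\<chi> x" A] assms(3-5) by blast
    then show "\<exists>q. good x q"
      unfolding good_def by (intro exI[of _ "(a, b)"]) simp
  qed
  from bchoice[OF this] obtain pr where pr: "\<forall>x\<in>T. good x (pr x)"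
    by blast
  have "card (A \<times> A) * t < card T"
    using assms(6) by (simp add: card_cartesian_product power2_eq_square)
  moreover have "pr ` T \<subseteq> A \<times> A"
    using pr by (auto simp: good_def)
  ultimately obtain q where q: "t < card {x\<in>T. pr x = q}"
    using pigeonhole_large_fibre[of T "A \<times> A" pr t] assms(1,2) by blast
  then have "{x\<in>T. pr x = q} \<noteq> {}"
    by (intro notI) simp
  then obtain x0 where "x0 \<in> T" "pr x0 = q"
    by blast
  obtain a b where ab: "q = (a, b)"
    by fastforce
  have "{x\<in>T. pr x = q} \<subseteq> {x\<in>T. \<chi> x a = \<chi> x b}"
    using pr ab by (auto simp: good_def)
  then have "card {x\<in>T. pr x = q} \<le> card {x\<in>T. \<chi> x a = \<chi> x b}"
    using assms(1) by (intro card_mono) simp_all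
  then have "t < card {x\<in>T. \<chi> x a = \<chi> x b}"
    using q by linarith
  moreover have "a \<in> A" "b \<in> A" "a \<noteq> b"
    using pr \<open>x0 \<in> T\<close> \<open>pr x0 = q\<close> ab by (auto simp: good_def)
  ultimately show ?thesis
    by blast
qed

lemma four_indices_with_equal_patterns:
  fixes F :: "'i \<Rightarrow> 'b" and \<chi> :: "'i \<Rightarrow> 'i \<Rightarrow> 'c"
  assumes "finite I" "finite B" "F ` I \<subseteq> B" "finite C" "\<forall>x\<in>I. \<forall>y\<in>I. \<chi> x y \<in> C"
    and "card B * (card C ^ 2 * (card C + 1) ^ 2 + card C + 1) < card I"
  shows "\<exists>a\<in>I. \<exists>b\<in>I. \<exists>c\<in>I. \<exists>d\<in>I. distinct [a, b, c, d] \<and> F c = F d \<and>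
    \<chi> a c = \<chi> a d \<and> \<chi> b c = \<chi> b d \<and> \<chi> c a = \<chi> c b \<and> \<chi> d a = \<chi> d b"
proof -
  define L where "L = card C"
  obtain z where z: "L ^ 2 * (L + 1) ^ 2 + L + 1 < card {x\<in>I. F x = z}"
    using pigeonhole_large_fibre[OF assms(1-3,6)] unfolding L_def by blast
  define J where "J = {x\<in>I. F x = z}"
  have "finite J"
    using assms(1) by (simp add: J_def)
  moreover have "L + 1 \<le> card J"
    using z by (simp add: J_def)
  ultimately obtain A where A: "A \<subseteq> J" "card A = L + 1" "finite A"
    by (meson obtain_subset_with_card_n rev_finite_subset)
  define T where "T = J - A"
  have "card A ^ 2 * L ^ 2 < card T"
    using z A \<open>finite J\<close> by (simp add: T_def J_def card_Diff_subset mult.commute)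
  moreover have "\<forall>x\<in>T. \<forall>y\<in>A. \<chi> x y \<in> C"
    using assms(5) A by (auto simp: T_def J_def)
  ultimately obtain a b where ab: "a \<in> A" "b \<in> A" "a \<noteq> b"
      and large: "L ^ 2 < card {x\<in>T. \<chi> x a = \<chi> x b}"
    using pair_agreeing_on_large_set[of T A C \<chi> "L ^ 2"] \<open>finite J\<close> A assms(4)
    unfolding L_def T_def by auto
  define T' where "T' = {x\<in>T. \<chi> x a = \<chi> x b}"
  have "(\<lambda>x. (\<chi> a x, \<chi> b x)) ` T' \<subseteq> C \<times> C"
    using assms(5) ab A by (auto simp: T'_def T_def J_def)
  moreover have "card (C \<times> C) < card T'"
    using large by (simp add: T'_def L_def card_cartesian_product power2_eq_square)
  ultimately obtain c d where "c \<in> T'" "d \<in> T'" "c \<noteq> d" "(\<chi> a c, \<chi> b c) = (\<chi> a d, \<chi> b d)"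
    using pigeonhole_collision[of "C \<times> C" "\<lambda>x. (\<chi> a x, \<chi> b x)" T'] assms(4) by blast
  then have "c \<in> T" "d \<in> T" "c \<noteq> d" "\<chi> c a = \<chi> c b" "\<chi> d a = \<chi> d b"
      "\<chi> a c = \<chi> a d" "\<chi> b c = \<chi> b d"
    by (auto simp: T'_def)
  moreover have "a \<in> J" "b \<in> J" "c \<in> J" "d \<in> J" "c \<notin> A" "d \<notin> A"
    using ab A \<open>c \<in> T\<close> \<open>d \<in> T\<close> by (auto simp: T_def)
  ultimately show ?thesis
    using ab by (intro bexI[of _ a] bexI[of _ b] bexI[of _ c] bexI[of _ d]) (auto simp: J_def)
qed

section \<open>Sunflowers and the Erdos-Rado bound\<close>

definition sunflower :: "'a set set \<Rightarrow> 'a set \<Rightarrow> bool" where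
  "sunflower S K \<longleftrightarrow> (\<forall>e\<in>S. \<forall>e'\<in>S. e \<noteq> e' \<longrightarrow> e \<inter> e' = K)"

lemma sunflower_kernel_subset:
  assumes "sunflower S K" "e \<in> S" "2 \<le> card S"
  shows "K \<subseteq> e"
proof -
  have "1 \<le> card (S - {e})"
    using assms(2,3) by (simp add: card_Diff_singleton_if)
  then obtain e' where "e' \<in> S" "e' \<noteq> e"
    by (metis Diff_iff card.empty ex_in_conv insertI1 not_one_le_zero)
  then show ?thesis
    using assms(1,2) unfolding sunflower_def by blast
qed

lemma sunflower_kernel_subset_rest:
  assumes "sunflower S K" "2 \<le> card S" "\<Union>S \<subseteq> V"
  shows "K \<subseteq> V - (\<Union>e\<in>S. e - K)"
proof -
  obtain e where "e \<in> S"
    using assms(2) by fastforce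
  then show ?thesis
    using sunflower_kernel_subset[OF assms(1) _ assms(2)] assms(3) by blast
qed

lemma sunflower_kernel_card_less:
  assumes "sunflower S K" "e \<in> S" "e' \<in> S" "e \<noteq> e'"
    and "finite e" "finite e'" "card e = card e'"
  shows "card K < card e"
proof -
  have K: "K = e \<inter> e'"
    using assms(1-4) unfolding sunflower_def by blast
  have "K \<noteq> e"
  proof
    assume "K = e"
    then have "e \<subseteq> e'"
      using K by blast
    then show False
      using assms(4,6,7) card_subset_eq by blast
  qed
  then have "K \<subset> e"
    using K by blast
  then show ?thesis
    by (rule psubset_card_mono[OF assms(5)])
qed

lemma sunflower_petals:
  assumes "sunflower S K" "2 \<le> card S" "\<forall>e\<in>S. finite e \<and> card e = r"
  shows "disjoint_family_on (\<lambda>e. e - K) S"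
    and "\<forall>e\<in>S. finite (e - K) \<and> card (e - K) = r - card K"
proof -
  show "disjoint_family_on (\<lambda>e. e - K) S"
    using assms(1) by (auto simp: disjoint_family_on_def sunflower_def)
  show "\<forall>e\<in>S. finite (e - K) \<and> card (e - K) = r - card K"
  proof
    fix e
    assume "e \<in> S"
    then have "K \<subseteq> e" "finite e" "card e = r"
      using sunflower_kernel_subset[OF assms(1) _ assms(2)] assms(3) by blast+
    then show "finite (e - K) \<and> card (e - K) = r - card K"
      by (simp add: card_Diff_subset finite_subset)
  qed
qed

lemma sunflower_if_card_le_1:
  assumes "card S \<le> 1" "finite S"
  shows "sunflower S K"
  using assms card_le_Suc0_iff_eq[of S] by (auto simp: sunflower_def)

lemma exists_maximal_disjoint_subfamily:
  assumes "finite F"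
  shows "\<exists>G\<subseteq>F. disjoint G \<and> (\<forall>e\<in>F. e \<noteq> {} \<longrightarrow> e \<inter> \<Union>G \<noteq> {})"
  using assms
proof (induction F rule: finite_induct)
  case empty
  show ?case
    by simp
next
  case (insert e F)
  then obtain G where G: "G \<subseteq> F" "disjoint G" "\<forall>e\<in>F. e \<noteq> {} \<longrightarrow> e \<inter> \<Union>G \<noteq> {}"
    by blast
  show ?case
  proof (cases "e \<noteq> {} \<and> e \<inter> \<Union>G = {}")
    case True
    then have "disjoint (insert e G)"
      using G(2) by (auto simp: pairwise_insert disjnt_def)
    then show ?thesis
      using G(1,3) by (intro exI[of _ "insert e G"]) auto
  next
    case False
    then show ?thesis
      using G by (intro exI[of _ G]) auto
  qed
qed

lemma exists_popular_element:
  assumes "finite F" "finite U" "F \<noteq> {}" "\<forall>e\<in>F. e \<inter> U \<noteq> {}"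
  shows "\<exists>x\<in>U. card F \<le> card {e\<in>F. x \<in> e} * card U"
proof -
  from assms(4) have "\<forall>e\<in>F. \<exists>y. y \<in> e \<inter> U"
    by blast
  from bchoice[OF this] obtain h where h: "\<forall>e\<in>F. h e \<in> e \<inter> U"
    by blast
  then have "U \<noteq> {}"
    using assms(3) by blast
  with h obtain x where "x \<in> U" and x: "card F \<le> card (h -` {x} \<inter> F) * card U"
    using pigeonhole_card[of h F U] assms(1,2) by blast
  have "card (h -` {x} \<inter> F) \<le> card {e\<in>F. x \<in> e}"
    using h assms(1) by (intro card_mono) auto
  then show ?thesis
    using x \<open>x \<in> U\<close> by (meson le_trans mult_le_mono1)
qed

definition link :: "'a set set \<Rightarrow> 'a \<Rightarrow> 'a set set" where
  "link F x = (\<lambda>e. e - {x}) ` {e\<in>F. x \<in> e}"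

lemma card_link: "card (link F x) = card {e\<in>F. x \<in> e}"
proof -
  have "inj_on (\<lambda>e. e - {x}) {e\<in>F. x \<in> e}"
  proof (rule inj_onI)
    fix e e'
    assume "e \<in> {e\<in>F. x \<in> e}" "e' \<in> {e\<in>F. x \<in> e}" "e - {x} = e' - {x}"
    then show "e = e'"
      using insert_Diff[of x e] insert_Diff[of x e'] by simp
  qed
  then show ?thesis
    unfolding link_def by (rule card_image)
qed

lemma exists_large_link:
  assumes "finite F" "finite U" "\<forall>e\<in>F. e \<inter> U \<noteq> {}" "card U \<le> c" "c * t < card F"
  shows "\<exists>x. t < card (link F x)"
proof -
  have "F \<noteq> {}"
    using assms(5) by auto
  then obtain x where "card F \<le> card {e\<in>F. x \<in> e} * card U"
    using exists_popular_element[OF assms(1,2) _ assms(3)] by blast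
  also have "\<dots> \<le> card (link F x) * c"
    using assms(4) by (simp add: card_link)
  finally have "t * c < card (link F x) * c"
    using assms(5) by (metis mult.commute order_less_le_trans)
  then show ?thesis
    using mult_less_cancel2 by blast
qed

lemma sunflower_lift_from_link:
  assumes "S \<subseteq> link F x" "sunflower S K"
  shows "\<exists>S'\<subseteq>F. card S' = card S \<and> sunflower S' (insert x K)"
proof (intro exI conjI)
  show "insert x ` S \<subseteq> F"
    using assms(1) by (auto simp: link_def insert_absorb)
  have "\<forall>s\<in>S. x \<notin> s"
    using assms(1) by (auto simp: link_def)
  then have "inj_on (insert x) S"
    by (intro inj_onI) (simp add: insert_ident)
  then show "card (insert x ` S) = card S"
    by (rule card_image)
  show "sunflower (insert x ` S) (insert x K)"
    using assms(2) unfolding sunflower_def by blast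
qed

theorem erdos_rado_sunflower:
  assumes "finite F" "\<forall>e\<in>F. finite e \<and> card e = r" "(m - 1) ^ r * fact r < card F"
  shows "\<exists>S\<subseteq>F. card S = m \<and> (\<exists>K. sunflower S K)"
  using assms
proof (induction r arbitrary: F)
  case 0
  then have "F \<subseteq> {{}}"
    by auto
  then have "card F \<le> 1"
    using card_mono[of "{{}}" F] by simp
  with "0.prems"(3) show ?case
    by simp
next
  case (Suc r)
  obtain G where G: "G \<subseteq> F" "disjoint G" and hit: "\<forall>e\<in>F. e \<noteq> {} \<longrightarrow> e \<inter> \<Union>G \<noteq> {}"
    using exists_maximal_disjoint_subfamily[OF Suc.prems(1)] by blast
  show ?case
  proof (cases "m \<le> card G")
    case True
    then obtain S where "S \<subseteq> G" "card S = m"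
      by (meson obtain_subset_with_card_n)
    moreover have "sunflower S {}"
      using G(2) \<open>S \<subseteq> G\<close> by (auto simp: sunflower_def pairwise_def disjnt_def)
    ultimately show ?thesis
      using G(1) by blast
  next
    case False
    have "finite G"
      using G(1) Suc.prems(1) finite_subset by blast
    have "card (\<Union>G) \<le> (\<Sum>e\<in>G. card e)"
      by (rule card_Union_le_sum_card)
    also have "\<dots> = card G * Suc r"
      using G(1) Suc.prems(2) by (simp add: subset_iff)
    also have "\<dots> \<le> (m - 1) * Suc r"
      using False by (intro mult_le_mono1) simp
    finally have "card (\<Union>G) \<le> (m - 1) * Suc r" .
    moreover have "finite (\<Union>G)"
      using \<open>finite G\<close> G(1) Suc.prems(2) by blast
    moreover have "\<forall>e\<in>F. e \<inter> \<Union>G \<noteq> {}"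
      using hit Suc.prems(2) by fastforce
    moreover have "((m - 1) * Suc r) * ((m - 1) ^ r * fact r) < card F"
      using Suc.prems(3) by (simp only: power_Suc fact_Suc of_nat_id mult_ac)
    ultimately obtain x where "(m - 1) ^ r * fact r < card (link F x)"
      using exists_large_link[OF Suc.prems(1)] by blast
    moreover have "finite (link F x)" "\<forall>e\<in>link F x. finite e \<and> card e = r"
      using Suc.prems(1,2) by (auto simp: link_def)
    ultimately obtain S K where "S \<subseteq> link F x" "card S = m" "sunflower S K"
      using Suc.IH by blast
    then show ?thesis
      using sunflower_lift_from_link by metis
  qed
qed

lemma rgraph_edges_finite:
  assumes "is_rgraph r V E"
  shows "finite E" "\<forall>e\<in>E. finite e \<and> card e = r"
proof -
  have "finite V" "E \<subseteq> Pow V"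
    using assms by (auto simp: is_rgraph_def)
  then show "finite E"
    by (meson finite_Pow_iff finite_subset)
  show "\<forall>e\<in>E. finite e \<and> card e = r"
    using assms by (auto simp: is_rgraph_def intro: finite_subset)
qed

lemma rgraph_sunflower_kernel_card_less:
  assumes "is_rgraph r V E" "S \<subseteq> E" "2 \<le> card S" "sunflower S K"
  shows "card K < r"
proof -
  have "finite S"
    using assms(2) rgraph_edges_finite(1)[OF assms(1)] finite_subset by blast
  then obtain e e' where "e \<in> S" "e' \<in> S" "e \<noteq> e'"
    using assms(3) card_le_Suc0_iff_eq[of S] by auto
  then show ?thesis
    using sunflower_kernel_card_less[OF assms(4)] assms(2) rgraph_edges_finite(2)[OF assms(1)]
    by (metis subsetD)
qed

lemma has_sunflower_if_sunflower:
  assumes "is_rgraph r V E" "S \<subseteq> E" "sunflower S K"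
  shows "\<exists>d\<le>r - 1. has_sunflower E d (card S)"
proof (cases "card S \<le> 1")
  case True
  have "finite S"
    using assms(2) rgraph_edges_finite(1)[OF assms(1)] finite_subset by blast
  with True have "sunflower S {}"
    by (intro sunflower_if_card_le_1)
  then have "has_sunflower E 0 (card S)"
    unfolding has_sunflower_def using assms(2) by (intro exI[of _ S] exI[of _ "{}"]) (simp add: sunflower_def)
  then show ?thesis
    by blast
next
  case False
  then have "card K < r"
    using rgraph_sunflower_kernel_card_less[OF assms(1,2) _ assms(3)] by simp
  then show ?thesis
    using assms(2,3) unfolding has_sunflower_def sunflower_def by (intro exI[of _ "card K"]) auto
qed

lemma has_sunflower_if_g_sun_le:
  fixes V :: "nat set"
  assumes "is_rgraph r V E" "g_sun r m \<le> card E"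
  shows "\<exists>d\<le>r - 1. has_sunflower E d m"
proof -
  \<comment> \<open>Erdos-Rado makes the set under the LEAST in g_sun nonempty, so the LEAST is attained.\<close>
  have "\<forall>(V::nat set) E. is_rgraph r V E \<and> (m - 1) ^ r * fact r + 1 \<le> card E \<longrightarrow>
      (\<exists>d\<le>r - 1. has_sunflower E d m)"
  proof (intro allI impI)
    fix V :: "nat set" and E
    assume *: "is_rgraph r V E \<and> (m - 1) ^ r * fact r + 1 \<le> card E"
    then obtain S K where "S \<subseteq> E" "card S = m" "sunflower S K"
      using erdos_rado_sunflower[of E r m] rgraph_edges_finite[of r V E] by auto
    then show "\<exists>d\<le>r - 1. has_sunflower E d m"
      using has_sunflower_if_sunflower * by blast
  qed
  then have "\<forall>(V::nat set) E. is_rgraph r V E \<and> g_sun r m \<le> card E \<longrightarrow>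
      (\<exists>d\<le>r - 1. has_sunflower E d m)"
    unfolding g_sun_def by (rule LeastI)
  then show ?thesis
    using assms by blast
qed

lemma sunflower_vimage:
  assumes "inj_on h V" "\<Union>S \<subseteq> V" "sunflower ((`) h ` S) K"
  shows "sunflower S (V \<inter> h -` K)"
  unfolding sunflower_def
proof (intro ballI impI)
  fix e e'
  assume e: "e \<in> S" "e' \<in> S" "e \<noteq> e'"
  have sub: "e \<subseteq> V" "e' \<subseteq> V"
    using assms(2) e by auto
  then have "h ` e \<noteq> h ` e'"
    using inj_onD[OF inj_on_image_Pow[OF assms(1)]] e(3) by blast
  then have "K = h ` (e \<inter> e')"
    using assms(3) e inj_on_image_Int[OF assms(1) sub] unfolding sunflower_def by auto
  moreover have "e \<inter> e' \<subseteq> V"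
    using sub by blast
  ultimately show "e \<inter> e' = V \<inter> h -` K"
    using inj_on_image_mem_iff[OF assms(1)] by auto
qed

lemma sunflower_in_large_rgraph:
  fixes V :: "'a set"
  assumes "is_rgraph r V E" "g_sun r m \<le> card E"
  shows "\<exists>S\<subseteq>E. card S = m \<and> (\<exists>K. sunflower S K)"
proof -
  \<comment> \<open>g_sun only speaks about graphs on nat, so E is transported along an injection into nat.\<close>
  have "finite V" "E \<subseteq> Pow V"
    using assms(1) by (auto simp: is_rgraph_def)
  then obtain h :: "'a \<Rightarrow> nat" where h: "inj_on h V"
    using finite_imp_inj_to_nat_seg by blast
  have inj_E: "inj_on ((`) h) E"
    using inj_on_image_Pow[OF h] \<open>E \<subseteq> Pow V\<close> by (rule inj_on_subset)
  have "is_rgraph r (h ` V) ((`) h ` E)"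
    using assms(1) h by (auto simp: is_rgraph_def card_image inj_on_subset)
  moreover have "card ((`) h ` E) = card E"
    using inj_E by (rule card_image)
  ultimately obtain d where "has_sunflower ((`) h ` E) d m"
    using has_sunflower_if_g_sun_le assms(2) by fastforce
  then obtain S' K where S': "S' \<subseteq> (`) h ` E" "card S' = m" "sunflower S' K"
    unfolding has_sunflower_def sunflower_def by blast
  define S where "S = E \<inter> (`) h -` S'"
  have image_S: "(`) h ` S = S'"
    using S'(1) unfolding S_def by blast
  moreover have "inj_on ((`) h) S"
    using inj_E by (rule inj_on_subset) (simp add: S_def)
  ultimately have "card S = m"
    using S'(2) card_image by fastforce
  moreover have "\<Union>S \<subseteq> V"
    using \<open>E \<subseteq> Pow V\<close> by (auto simp: S_def)
  then have "sunflower S (V \<inter> h -` K)"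
    using sunflower_vimage[OF h _, of S K] S'(3) image_S by simp
  ultimately show ?thesis
    unfolding S_def by blast
qed

section \<open>Copies of H on blocks of consecutive vertices\<close>

definition block :: "nat \<Rightarrow> nat \<Rightarrow> nat \<Rightarrow> nat set" where
  "block n0 p j = {n0 + j * p ..< n0 + j * p + p}"

lemma block_disjoint:
  assumes "i \<noteq> j"
  shows "block n0 p i \<inter> block n0 p j = {}"
proof -
  have "n0 + i * p + p \<le> n0 + j * p" if "i < j" for i j
    using mult_le_mono1[of "Suc i" j p] that by simp
  then show ?thesis
    using assms by (cases "i < j") (auto simp: block_def)
qed

lemma block_subset:
  assumes "j < M"
  shows "block n0 p j \<subseteq> {n0 ..< n0 + M * p}"
  using mult_le_mono1[of "Suc j" M p] assms by (auto simp: block_def)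

lemma Un_block_eqD:
  assumes "X \<subseteq> {..<n0}" "0 < p" "X \<union> block n0 p i = X \<union> block n0 p j"
  shows "i = j"
proof (rule ccontr)
  assume "i \<noteq> j"
  have "n0 + i * p \<in> block n0 p i"
    using assms(2) by (simp add: block_def)
  then have "n0 + i * p \<in> block n0 p j"
    using assms(1,3) by blast
  with \<open>n0 + i * p \<in> block n0 p i\<close> show False
    using block_disjoint[OF \<open>i \<noteq> j\<close>] by blast
qed

lemma exists_bij_onto_blocks:
  fixes P :: "'i \<Rightarrow> 'a set"
  assumes "bij_betw \<psi> R {..<n0}" "disjoint_family_on P I" "R \<inter> (\<Union>i\<in>I. P i) = {}"
    and "\<forall>i\<in>I. finite (P i) \<and> card (P i) = p" "inj_on \<sigma> I"
  shows "\<exists>\<phi>. bij_betw \<phi> (R \<union> (\<Union>i\<in>I. P i)) ({..<n0} \<union> (\<Union>i\<in>I. block n0 p (\<sigma> i))) \<and>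
    (\<forall>v\<in>R. \<phi> v = \<psi> v) \<and> (\<forall>i\<in>I. \<phi> ` P i = block n0 p (\<sigma> i))"
proof -
  have "\<forall>i\<in>I. \<exists>\<beta>. bij_betw \<beta> (P i) (block n0 p (\<sigma> i))"
    using assms(4) by (auto intro!: finite_same_card_bij simp: block_def)
  from bchoice[OF this] obtain \<beta> where \<beta>: "\<forall>i\<in>I. bij_betw (\<beta> i) (P i) (block n0 p (\<sigma> i))"
    by blast
  define idx where "idx v = (THE i. i \<in> I \<and> v \<in> P i)" for v
  have idx: "idx v = i" if "i \<in> I" "v \<in> P i" for i v
    unfolding idx_def using assms(2) that by (auto simp: disjoint_family_on_def)
  define \<beta>' where "\<beta>' v = \<beta> (idx v) v" for v
  have "bij_betw \<beta>' (P i) (block n0 p (\<sigma> i))" if "i \<in> I" for i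
    using \<beta> that by (subst bij_betw_cong[where g = "\<beta> i"]) (auto simp: \<beta>'_def idx)
  moreover have "disjoint_family_on (\<lambda>i. block n0 p (\<sigma> i)) I"
    using block_disjoint inj_onD[OF assms(5)] unfolding disjoint_family_on_def by metis
  ultimately have "bij_betw \<beta>' (\<Union>i\<in>I. P i) (\<Union>i\<in>I. block n0 p (\<sigma> i))"
    by (intro bij_betw_UNION_disjoint)
  moreover have "{..<n0} \<inter> (\<Union>i\<in>I. block n0 p (\<sigma> i)) = {}"
    by (auto simp: block_def)
  ultimately have "bij_betw (\<lambda>v. if v \<in> R then \<psi> v else \<beta>' v)
      (R \<union> (\<Union>i\<in>I. P i)) ({..<n0} \<union> (\<Union>i\<in>I. block n0 p (\<sigma> i)))"
    using bij_betw_disjoint_Un[OF assms(1)] assms(3) by blast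
  moreover have "(\<lambda>v. if v \<in> R then \<psi> v else \<beta>' v) ` P i = block n0 p (\<sigma> i)" if "i \<in> I" for i
  proof -
    have "(\<lambda>v. if v \<in> R then \<psi> v else \<beta>' v) ` P i = \<beta> i ` P i"
      using assms(3) that by (intro image_cong) (auto simp: \<beta>'_def idx)
    then show ?thesis
      using \<beta> that bij_betw_imp_surj_on by fastforce
  qed
  ultimately show ?thesis
    by (intro exI[of _ "\<lambda>v. if v \<in> R then \<psi> v else \<beta>' v"]) auto
qed

lemma sunflower_copy_onto_blocks:
  assumes "is_rgraph r V E" "S \<subseteq> E" "2 \<le> card S" "sunflower S K" "finite J" "card J = card S"
    and "bij_betw \<psi> (V - (\<Union>e\<in>S. e - K)) {..<n0}"
  shows "\<exists>\<phi>. inj_on \<phi> V \<and> \<phi> ` V = {..<n0} \<union> (\<Union>j\<in>J. block n0 (r - card K) j) \<and>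
    (\<lambda>j. \<psi> ` K \<union> block n0 (r - card K) j) ` J \<subseteq> (`) \<phi> ` E"
proof -
  define R where "R = V - (\<Union>e\<in>S. e - K)"
  define p where "p = r - card K"
  have "finite S"
    using assms(3) by (intro card_ge_0_finite) simp
  then obtain \<sigma> where \<sigma>: "bij_betw \<sigma> S J"
    using finite_same_card_bij[of S J] assms(5,6) by auto
  then have \<sigma>_S: "J = \<sigma> ` S"
    by (simp add: bij_betw_def)
  have "\<Union>S \<subseteq> V" "\<forall>e\<in>S. finite e \<and> card e = r"
    using assms(1,2) rgraph_edges_finite(2)[OF assms(1)] unfolding is_rgraph_def by blast+
  note petals = sunflower_petals[OF assms(4,3) this(2), folded p_def]
  have "R \<inter> (\<Union>e\<in>S. e - K) = {}"
    by (auto simp: R_def)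
  from exists_bij_onto_blocks[OF assms(7)[folded R_def] petals(1) this petals(2)
      bij_betw_imp_inj_on[OF \<sigma>]]
  obtain \<phi> where \<phi>: "bij_betw \<phi> (R \<union> (\<Union>e\<in>S. e - K)) ({..<n0} \<union> (\<Union>e\<in>S. block n0 p (\<sigma> e)))"
      and \<phi>_R: "\<forall>v\<in>R. \<phi> v = \<psi> v" and \<phi>_petal: "\<forall>e\<in>S. \<phi> ` (e - K) = block n0 p (\<sigma> e)"
    by (elim exE conjE) (rule that; assumption)
  have "R \<union> (\<Union>e\<in>S. e - K) = V"
    using \<open>\<Union>S \<subseteq> V\<close> by (auto simp: R_def)
  with \<phi> have "inj_on \<phi> V" "\<phi> ` V = {..<n0} \<union> (\<Union>j\<in>J. block n0 p j)"
    by (simp_all add: bij_betw_def \<sigma>_S image_image)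
  moreover have "K \<subseteq> R"
    unfolding R_def by (rule sunflower_kernel_subset_rest[OF assms(4,3) \<open>\<Union>S \<subseteq> V\<close>])
  then have "\<phi> ` K = \<psi> ` K"
    using \<phi>_R by (intro image_cong) auto
  have "\<phi> ` e = \<psi> ` K \<union> block n0 p (\<sigma> e)" if "e \<in> S" for e
  proof -
    have "K \<union> (e - K) = e"
      using sunflower_kernel_subset[OF assms(4) that assms(3)] by blast
    then have "\<phi> ` e = \<phi> ` K \<union> \<phi> ` (e - K)"
      using image_Un[of \<phi> K "e - K"] by simp
    with \<open>\<phi> ` K = \<psi> ` K\<close> show ?thesis
      using \<phi>_petal that by simp
  qed
  then have "(\<lambda>j. \<psi> ` K \<union> block n0 p j) ` J = (`) \<phi> ` S"
    unfolding \<sigma>_S image_image by (intro image_cong) simp_all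
  then have "(\<lambda>j. \<psi> ` K \<union> block n0 p j) ` J \<subseteq> (`) \<phi> ` E"
    by (simp add: image_mono assms(2))
  ultimately show ?thesis
    unfolding p_def by blast
qed

lemma kernel_block_edge:
  assumes "bij_betw \<psi> R {..<n0}" "K \<subseteq> R" "card K + p = r" "j < M" "n0 + M * p \<le> n"
  shows "\<psi> ` K \<union> block n0 p j \<in> Kedges n r"
proof -
  have "finite K"
    using bij_betw_finite[OF assms(1)] finite_subset[OF assms(2)] by simp
  have "\<psi> ` K \<subseteq> {..<n0}"
    using assms(1,2) bij_betw_imp_surj_on by blast
  then have "\<psi> ` K \<inter> block n0 p j = {}"
    by (auto simp: block_def)
  moreover have "card (\<psi> ` K) = card K"
    using card_image[OF inj_on_subset[OF bij_betw_imp_inj_on[OF assms(1)] assms(2)]] .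
  moreover have "\<psi> ` K \<union> block n0 p j \<subseteq> {..<n}"
    using \<open>\<psi> ` K \<subseteq> {..<n0}\<close> block_subset[OF assms(4), of n0 p] assms(5) by auto
  ultimately show ?thesis
    using \<open>finite K\<close> assms(3) by (simp add: Kedges_def card_Un_disjoint block_def)
qed

lemma exists_indistinguishable_blocks:
  fixes col :: "nat \<Rightarrow> nat \<Rightarrow> 'c"
  assumes "finite C" "\<forall>u < n0 + M * p. \<forall>j<M. col u j \<in> C"
    and "card C ^ n0 * ((card C ^ p)\<^sup>2 * (card C ^ p + 1)\<^sup>2 + card C ^ p + 1) < M"
  shows "\<exists>a<M. \<exists>b<M. \<exists>c<M. \<exists>d<M. distinct [a, b, c, d] \<and>
    (\<forall>u \<in> {..<n0} \<union> block n0 p a \<union> block n0 p b. col u c = col u d) \<and>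
    (\<forall>u \<in> block n0 p c \<union> block n0 p d. col u a = col u b)"
proof -
  \<comment> \<open>F j: the colours the vertices below n0 give to edge j; \<chi> x y: those the vertices
    of block x give to edge y.\<close>
  define F where "F j = restrict (\<lambda>u. col u j) {..<n0}" for j
  define \<chi> where "\<chi> x y = restrict (\<lambda>i. col (n0 + x * p + i) y) {..<p}" for x y
  have "F j \<in> {..<n0} \<rightarrow>\<^sub>E C" if "j < M" for j
    unfolding F_def restrict_PiE Pi_iff using assms(2) that trans_less_add1[of _ n0 "M * p"] by simp
  then have "F ` {..<M} \<subseteq> {..<n0} \<rightarrow>\<^sub>E C"
    by blast
  moreover have "\<forall>x\<in>{..<M}. \<forall>y\<in>{..<M}. \<chi> x y \<in> {..<p} \<rightarrow>\<^sub>E C"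
  proof (intro ballI)
    fix x y
    assume "x \<in> {..<M}" "y \<in> {..<M}"
    moreover have "n0 + x * p + i < n0 + M * p" if "x < M" "i < p" for i
      using block_subset[OF that(1), of n0 p] that(2) by (auto simp: block_def)
    ultimately show "\<chi> x y \<in> {..<p} \<rightarrow>\<^sub>E C"
      unfolding \<chi>_def restrict_PiE Pi_iff using assms(2) by simp
  qed
  moreover have "card ({..<n0} \<rightarrow>\<^sub>E C) = card C ^ n0" "card ({..<p} \<rightarrow>\<^sub>E C) = card C ^ p"
    by (simp_all add: card_funcsetE)
  with assms(3) have "card ({..<n0} \<rightarrow>\<^sub>E C) * ((card ({..<p} \<rightarrow>\<^sub>E C))\<^sup>2 *
      (card ({..<p} \<rightarrow>\<^sub>E C) + 1)\<^sup>2 + card ({..<p} \<rightarrow>\<^sub>E C) + 1) < card {..<M}"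
    by simp
  ultimately have "\<exists>a\<in>{..<M}. \<exists>b\<in>{..<M}. \<exists>c\<in>{..<M}. \<exists>d\<in>{..<M}. distinct [a, b, c, d] \<and>
      F c = F d \<and> \<chi> a c = \<chi> a d \<and> \<chi> b c = \<chi> b d \<and> \<chi> c a = \<chi> c b \<and> \<chi> d a = \<chi> d b"
    using assms(1) by (intro four_indices_with_equal_patterns) (simp_all add: finite_PiE)
  then obtain a b c d where abcd: "a < M" "b < M" "c < M" "d < M" "distinct [a, b, c, d]"
      "F c = F d" "\<chi> a c = \<chi> a d" "\<chi> b c = \<chi> b d" "\<chi> c a = \<chi> c b" "\<chi> d a = \<chi> d b"
    by blast
  have F_agree: "col u c = col u d" if "u < n0" for u
    using fun_cong[OF abcd(6), of u] that by (simp add: F_def)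
  have \<chi>_agree: "col u y = col u y'" if "\<chi> x y = \<chi> x y'" "u \<in> block n0 p x" for x y y' u
  proof -
    define i where "i = u - (n0 + x * p)"
    have "i < p" "u = n0 + x * p + i"
      using that(2) by (auto simp: block_def i_def)
    then show ?thesis
      using fun_cong[OF that(1), of i] by (simp add: \<chi>_def)
  qed
  have "\<forall>u \<in> {..<n0} \<union> block n0 p a \<union> block n0 p b. col u c = col u d"
    using F_agree \<chi>_agree[OF abcd(7)] \<chi>_agree[OF abcd(8)] by blast
  moreover have "\<forall>u \<in> block n0 p c \<union> block n0 p d. col u a = col u b"
    using \<chi>_agree[OF abcd(9)] \<chi>_agree[OF abcd(10)] by blast
  ultimately show ?thesis
    using abcd(1-5) by blast
qed

section \<open>Local colourings\<close>

lemma copy_edges_subset_Kedges: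
  assumes "is_rgraph r V E" "inj_on \<phi> V" "\<phi> ` V \<subseteq> {..<n}"
  shows "(`) \<phi> ` E \<subseteq> Kedges n r"
proof
  fix X
  assume "X \<in> (`) \<phi> ` E"
  then obtain e where e: "e \<in> E" "X = \<phi> ` e"
    by blast
  then have "e \<subseteq> V" "card e = r"
    using assms(1) by (auto simp: is_rgraph_def)
  then show "X \<in> Kedges n r"
    using e assms(2,3) inj_on_subset[OF assms(2)] by (auto simp: Kedges_def card_image)
qed

lemma local_coloring_exists:
  assumes "is_rgraph r V E" "V \<noteq> {}"
  shows "\<exists>k f. local_coloring n r V E k f"
proof -
  have "finite (Kedges n r)"
    by (rule finite_subset[of _ "Pow {..<n}"]) (auto simp: Kedges_def)
  then obtain h :: "nat set \<Rightarrow> nat" and N where h: "h ` Kedges n r = {i. i < N}" "inj_on h (Kedges n r)"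
    using finite_imp_inj_to_nat_seg by blast
  define f where "f v e = h e + 1" for v :: nat and e
  have "h e < N" if "e \<in> Kedges n r" for e
    using h(1) that by blast
  then have "\<forall>v<n. \<forall>e\<in>Kedges n r. f v e \<in> {1..N}"
    by (simp add: f_def Suc_le_eq)
  moreover have "\<exists>u\<in>\<phi> ` V. inj_on (f u) ((`) \<phi> ` E)" if "inj_on \<phi> V" "\<phi> ` V \<subseteq> {..<n}" for \<phi>
  proof -
    have "inj_on (f u) ((`) \<phi> ` E)" for u
      using inj_on_subset[OF h(2) copy_edges_subset_Kedges[OF assms(1) that]]
      by (simp add: f_def inj_on_def)
    then show ?thesis
      using assms(2) by blast
  qed
  ultimately show ?thesis
    unfolding local_coloring_def by blast
qed

lemma C_loc_local_coloring:
  assumes "is_rgraph r V E" "V \<noteq> {}"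
  shows "\<exists>f. local_coloring n r V E (C_loc r n V E) f"
  unfolding C_loc_def using local_coloring_exists[OF assms] by (rule LeastI_ex)

lemma local_coloring_colours_pos:
  assumes "local_coloring n r V E k f" "0 < n" "r \<le> n"
  shows "1 \<le> k"
proof -
  have "{..<r} \<in> Kedges n r"
    using assms(3) by (auto simp: Kedges_def)
  then have "f 0 {..<r} \<in> {1..k}"
    using assms(1,2) by (auto simp: local_coloring_def)
  then show ?thesis
    by simp
qed

lemma local_coloring_rainbow_vertex_on_blocks:
  assumes "is_rgraph r V E" "S \<subseteq> E" "2 \<le> card S" "sunflower S K"
    and "local_coloring n r V E k f" "bij_betw \<psi> (V - (\<Union>e\<in>S. e - K)) {..<n0}"
    and "p = r - card K" "n0 + M * p \<le> n" "J \<subseteq> {..<M}" "card J = card S"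
  shows "\<exists>u \<in> {..<n0} \<union> (\<Union>j\<in>J. block n0 p j).
    inj_on (f u) ((\<lambda>j. \<psi> ` K \<union> block n0 p j) ` J)"
proof -
  have "finite J"
    using assms(9) finite_subset by blast
  from sunflower_copy_onto_blocks[OF assms(1-4) this assms(10,6), folded assms(7)]
  obtain \<phi> where \<phi>: "inj_on \<phi> V" "\<phi> ` V = {..<n0} \<union> (\<Union>j\<in>J. block n0 p j)"
      and copy: "(\<lambda>j. \<psi> ` K \<union> block n0 p j) ` J \<subseteq> (`) \<phi> ` E"
    by blast
  have "block n0 p j \<subseteq> {..<n}" if "j \<in> J" for j
  proof -
    have "j < M"
      using assms(9) that by blast
    then show ?thesis
      using block_subset[of j M n0 p] assms(8) by auto
  qed
  then have "\<phi> ` V \<subseteq> {..<n}"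
    using \<phi>(2) assms(8) by auto
  then obtain u where "u \<in> \<phi> ` V" and rainbow: "inj_on (f u) ((`) \<phi> ` E)"
    using assms(5) \<phi>(1) unfolding local_coloring_def by blast
  have "inj_on (f u) ((\<lambda>j. \<psi> ` K \<union> block n0 p j) ` J)"
    using rainbow copy by (rule inj_on_subset)
  with \<open>u \<in> \<phi> ` V\<close> show ?thesis
    unfolding \<phi>(2) by blast
qed

lemma local_coloring_block_count:
  assumes "is_rgraph r V E" "S \<subseteq> E" "card S = 4" "sunflower S K"
    and "local_coloring n r V E k f" "bij_betw \<psi> (V - (\<Union>e\<in>S. e - K)) {..<n0}"
    and "p = r - card K" "n0 + M * p \<le> n"
  shows "M \<le> k ^ n0 * ((k ^ p)\<^sup>2 * (k ^ p + 1)\<^sup>2 + k ^ p + 1)"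
proof (rule ccontr)
  assume "\<not> ?thesis"
  then have many: "card {1..k} ^ n0 *
      ((card {1..k} ^ p)\<^sup>2 * (card {1..k} ^ p + 1)\<^sup>2 + card {1..k} ^ p + 1) < M"
    by simp
  define R where "R = V - (\<Union>e\<in>S. e - K)"
  note \<psi> = assms(6)[folded R_def]
  have "\<Union>S \<subseteq> V"
    using assms(1,2) by (auto simp: is_rgraph_def)
  then have "K \<subseteq> R"
    unfolding R_def using sunflower_kernel_subset_rest[OF assms(4)] assms(3) by simp
  have "card K < r"
    using rgraph_sunflower_kernel_card_less[OF assms(1,2) _ assms(4)] assms(3) by simp
  then have "card K + p = r" "0 < p"
    using assms(7) by simp_all
  define B where "B j = \<psi> ` K \<union> block n0 p j" for j
  have "B j \<in> Kedges n r" if "j < M" for j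
    unfolding B_def using kernel_block_edge[OF \<psi> \<open>K \<subseteq> R\<close> \<open>card K + p = r\<close> that assms(8)] .
  then have "\<forall>u < n0 + M * p. \<forall>j<M. f u (B j) \<in> {1..k}"
    using assms(5,8) by (auto simp: local_coloring_def)
  then obtain a b c d where abcd: "a < M" "b < M" "c < M" "d < M" "distinct [a, b, c, d]"
      and agree_cd: "\<forall>u \<in> {..<n0} \<union> block n0 p a \<union> block n0 p b. f u (B c) = f u (B d)"
      and agree_ab: "\<forall>u \<in> block n0 p c \<union> block n0 p d. f u (B a) = f u (B b)"
    using exists_indistinguishable_blocks[of "{1..k}" n0 M p "\<lambda>u j. f u (B j)"] many by blast
  have "card {a, b, c, d} = card S"
    using abcd(5) distinct_card[of "[a, b, c, d]"] assms(3) by simp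
  then obtain u where u: "u \<in> {..<n0} \<union> (\<Union>j\<in>{a, b, c, d}. block n0 p j)"
      and rainbow: "inj_on (f u) (B ` {a, b, c, d})"
    using local_coloring_rainbow_vertex_on_blocks[OF assms(1,2) _ assms(4-8), of "{a, b, c, d}"]
      abcd(1-4) assms(3)
    unfolding B_def by auto
  have "\<psi> ` K \<subseteq> {..<n0}"
    using \<psi> \<open>K \<subseteq> R\<close> bij_betw_imp_surj_on by blast
  then have "B i \<noteq> B j" if "i \<noteq> j" for i j
    using Un_block_eqD[of "\<psi> ` K" n0 p i j] \<open>0 < p\<close> that unfolding B_def by blast
  then have "f u (B i) \<noteq> f u (B j)" if "i \<in> {a, b, c, d}" "j \<in> {a, b, c, d}" "i \<noteq> j" for i j
    using inj_onD[OF rainbow _ imageI[OF that(1)] imageI[OF that(2)]] that(3) by blast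
  then have "f u (B c) \<noteq> f u (B d)" "f u (B a) \<noteq> f u (B b)"
    using abcd(5) by auto
  then show False
    using u agree_cd agree_ab by auto
qed

lemma quartic_bound:
  fixes L :: nat
  assumes "1 \<le> L"
  shows "L\<^sup>2 * (L + 1)\<^sup>2 + L + 1 \<le> 6 * L ^ 4"
proof -
  have "(L + 1)\<^sup>2 \<le> (2 * L)\<^sup>2"
    using assms by (intro power_mono) auto
  then have "L\<^sup>2 * (L + 1)\<^sup>2 \<le> 4 * L ^ 4"
    using mult_le_mono2[of "(L + 1)\<^sup>2" "(2 * L)\<^sup>2" "L\<^sup>2"]
    by (simp add: power_mult_distrib power2_eq_square power4_eq_xxxx mult_ac)
  moreover have "L \<le> L ^ 4" "1 \<le> L ^ 4"
    using assms by (simp_all add: power_increasing[of 1 4 L, simplified])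
  ultimately show ?thesis
    by linarith
qed

lemma local_coloring_polynomial_bound:
  assumes "is_rgraph r V E" "S \<subseteq> E" "card S = 4" "sunflower S K"
    and "local_coloring n r V E k f" "1 \<le> k"
    and "bij_betw \<psi> (V - (\<Union>e\<in>S. e - K)) {..<n0}" "p = r - card K"
  shows "n \<le> (n0 + 7 * p) * k ^ (n0 + 4 * p)"
proof -
  define D where "D = k ^ (n0 + 4 * p)"
  have "1 \<le> D"
    using assms(6) by (simp add: D_def)
  have "card K < r"
    using rgraph_sunflower_kernel_card_less[OF assms(1,2) _ assms(4)] assms(3) by simp
  then have "0 < p"
    using assms(8) by simp
  show ?thesis
  proof (cases "n \<le> n0")
    case True
    then show ?thesis
      using \<open>1 \<le> D\<close> mult_le_mono[of n0 "n0 + 7 * p" 1 D] unfolding D_def by linarith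
  next
    case False
    define M where "M = (n - n0) div p"
    have "n0 + M * p \<le> n"
      using False div_times_less_eq_dividend[of "n - n0" p] unfolding M_def by linarith
    then have "M \<le> k ^ n0 * ((k ^ p)\<^sup>2 * (k ^ p + 1)\<^sup>2 + k ^ p + 1)"
      using local_coloring_block_count[OF assms(1-5,7,8)] by blast
    also have "\<dots> \<le> k ^ n0 * (6 * (k ^ p) ^ 4)"
      using quartic_bound[of "k ^ p"] assms(6) by (intro mult_le_mono2) simp
    also have "\<dots> = 6 * D"
      by (simp add: D_def power_add power_mult[symmetric] mult.commute)
    finally have "M * p \<le> 6 * D * p"
      by simp
    moreover have "n < n0 + M * p + p"
      using False mod_less_divisor[OF \<open>0 < p\<close>, of "n - n0"] div_mult_mod_eq[of "n - n0" p]
      unfolding M_def by linarith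
    moreover have "n0 \<le> n0 * D" "p \<le> p * D"
      using \<open>1 \<le> D\<close> by simp_all
    moreover have "(n0 + 7 * p) * D = n0 * D + 6 * D * p + p * D"
      by (simp add: algebra_simps)
    ultimately show ?thesis
      unfolding D_def[symmetric] by linarith
  qed
qed

lemma C_loc_polynomial_bound:
  assumes "is_rgraph r V E" "S \<subseteq> E" "card S = 4" "sunflower S K" "0 < r" "r \<le> n"
    and "n0 = card (V - (\<Union>e\<in>S. e - K))" "p = r - card K"
  shows "1 \<le> C_loc r n V E \<and> n \<le> (n0 + 7 * p) * C_loc r n V E ^ (n0 + 4 * p)"
proof -
  have "finite V"
    using assms(1) by (simp add: is_rgraph_def)
  then obtain \<psi> where \<psi>: "bij_betw \<psi> (V - (\<Union>e\<in>S. e - K)) {..<n0}"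
    using ex_bij_betw_finite_nat[of "V - (\<Union>e\<in>S. e - K)"] assms(7) by (auto simp: atLeast0LessThan)
  obtain e where "e \<in> E"
    using assms(2,3) by fastforce
  then have "V \<noteq> {}"
    using assms(1,5) by (auto simp: is_rgraph_def)
  then obtain f where f: "local_coloring n r V E (C_loc r n V E) f"
    using C_loc_local_coloring[OF assms(1)] by blast
  moreover have "1 \<le> C_loc r n V E"
    using local_coloring_colours_pos[OF f] assms(5,6) by simp
  ultimately show ?thesis
    using local_coloring_polynomial_bound[OF assms(1-4) f _ \<psi> assms(8)] by blast
qed

lemma powr_root_le_of_le_mult_power:
  fixes x c k :: real and D :: nat
  assumes "0 \<le> x" "0 < c" "1 \<le> k" "1 \<le> D" "x \<le> c * k ^ D"
  shows "(1 / c) powr (1 / D) * x powr (1 / D) \<le> k"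
proof -
  have "(1 / c) powr (1 / D) * x powr (1 / D) = (x / c) powr (1 / D)"
    using assms(1,2) by (simp add: powr_mult[symmetric])
  also have "\<dots> \<le> (k ^ D) powr (1 / D)"
    using assms by (intro powr_mono2) (auto simp: field_simps)
  also have "\<dots> = k"
    using assms(3,4) by (simp add: powr_realpow[symmetric] powr_powr)
  finally show ?thesis .
qed

lemma bigomega_root_if_polynomial_bound:
  fixes g :: "nat \<Rightarrow> nat" and C D :: nat
  assumes "0 < C" "1 \<le> D" "\<forall>\<^sub>F n in at_top. 1 \<le> g n \<and> n \<le> C * g n ^ D"
  shows "(\<lambda>n. real (g n)) \<in> \<Omega>(\<lambda>n. real n powr (1 / D))"
proof (rule landau_omega.bigI)
  show "0 < (1 / real C) powr (1 / D)"
    using assms(1) by simp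
  show "\<forall>\<^sub>F n in at_top. (1 / real C) powr (1 / D) * norm (real n powr (1 / D)) \<le> norm (real (g n))"
    using assms(3)
  proof eventually_elim
    case (elim n)
    then have "real n \<le> real C * real (g n) ^ D"
      by (metis of_nat_le_iff of_nat_mult of_nat_power)
    then show ?case
      using powr_root_le_of_le_mult_power[of "real n" "real C" "real (g n)" D] assms(1,2) elim by simp
  qed
qed

theorem theorem5:
  fixes r :: nat and V :: "'a set" and E :: "'a set set"
  assumes "r \<ge> 2" and "is_rgraph r V E" and "card E \<ge> g_sun r 4"
  shows "\<exists>b>0. (\<lambda>n. real (C_loc r n V E)) \<in> \<Omega>(\<lambda>n. real n powr b)"
proof -
  obtain S K where S: "S \<subseteq> E" "card S = 4" "sunflower S K"
    using sunflower_in_large_rgraph[OF assms(2,3)] by blast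
  define n0 where "n0 = card (V - (\<Union>e\<in>S. e - K))"
  define p where "p = r - card K"
  have "card K < r"
    using rgraph_sunflower_kernel_card_less[OF assms(2) S(1) _ S(3)] S(2) by simp
  then have "0 < n0 + 7 * p" "1 \<le> n0 + 4 * p"
    by (simp_all add: p_def)
  moreover have "\<forall>\<^sub>F n in at_top.
      1 \<le> C_loc r n V E \<and> n \<le> (n0 + 7 * p) * C_loc r n V E ^ (n0 + 4 * p)"
    using eventually_ge_at_top[of r]
    by eventually_elim (use C_loc_polynomial_bound[OF assms(2) S] assms(1) n0_def p_def in auto)
  ultimately have "(\<lambda>n. real (C_loc r n V E)) \<in> \<Omega>(\<lambda>n. real n powr (1 / (n0 + 4 * p)))"
    by (rule bigomega_root_if_polynomial_bound)
  then show ?thesis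
    using \<open>1 \<le> n0 + 4 * p\<close> by (intro exI[of _ "1 / (n0 + 4 * p)"]) simp
qed

end
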